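(* Let $\div$ be a belief change operator satisfying (C1)–(C7) and (C8), (C9). Then the following are equivalent: (a) $\div$ satisfies, for all epistemic states $\Psi$ and formulas $\alpha,\beta,\gamma$: (C10) if $\neg\alpha\models\gamma$ then $\Psi\div\beta\models\gamma$ implies $\Psi\div\alpha\div\beta\models\gamma$; and (C11) if $\alpha\models\gamma$ then $\Psi\div\alpha\div\beta\models\gamma$ implies $\Psi\div\beta\models\gamma$. (b) There is a faithful assignment $\Psi\mapsto\le_\Psi$ with $[\![\Psi\div\alpha]\!]=[\![\Psi]\!]\cup\min([\![\neg\alpha]\!],\le_\Psi)$ for all $\Psi,\alpha$, which satisfies for all $\Psi,\alpha$ and worlds $\omega_1\in[\![\neg\alpha]\!]$, $\omega_2\in[\![\alpha]\!]$: (CR10) $\omega_1<_\Psi\omega_2\Rightarrow\omega_1<_{\Psi\div\alpha}\omega_2$; (CR11) $\omega_1\le_\Psi\omega_2\Rightarrow\omega_1\le_{\Psi\div\alpha}\omega_2$.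
   Context: $\Sigma$ is a nonempty finite set of propositional variables, $\mathcal{L}$ the propositional language over $\Sigma$, $\Omega$ the set of worlds. $[\![\alpha]\!]$ is the set of models of $\alpha$; for a set $X$ of formulas $[\![X]\!]$ is the set of worlds satisfying all of $X$; $Cn(X)=\{\beta\mid X\models\beta\}$. $\mathcal{E}$ is a set of epistemic states; each $\Psi\in\mathcal{E}$ has a deductively closed belief set $\mathrm{Bel}(\Psi)\subseteq\mathcal{L}$; $\Psi\models\alpha$ iff $\alpha\in\mathrm{Bel}(\Psi)$; $[\![\Psi]\!]=[\![\mathrm{Bel}(\Psi)]\!]$. A belief change operator is a map $\div:\mathcal{E}\times\mathcal{L}\to\mathcal{E}$; $\Psi\div\alpha\div\beta$ means $(\Psi\div\alpha)\div\beta$. Postulates, for all $\Psi,\alpha,\beta$: (C1) $\mathrm{Bel}(\Psi\div\alpha)\subseteq\mathrm{Bel}(\Psi)$; (C2) if $\alpha\notin\mathrm{Bel}(\Psi)$ then $\mathrm{Bel}(\Psi)\subseteq\mathrm{Bel}(\Psi\div\alpha)$; (C3) if $\alpha\not\equiv\top$ then $\alpha\notin\mathrm{Bel}(\Psi\div\alpha)$; (C4) $\mathrm{Bel}(\Psi)\subseteq Cn(\mathrm{Bel}(\Psi\div\alpha)\cup\{\alpha\})$; (C5) if $\alpha\equiv\beta$ then $\mathrm{Bel}(\Psi\div\alpha)=\mathrm{Bel}(\Psi\div\beta)$; (C6) $\mathrm{Bel}(\Psi\div\alpha)\cap\mathrm{Bel}(\Psi\div\beta)\subseteq\mathrm{Bel}(\Psi\div(\alpha\land\beta))$;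 (C7) if $\beta\notin\mathrm{Bel}(\Psi\div(\alpha\land\beta))$ then $\mathrm{Bel}(\Psi\div(\alpha\land\beta))\subseteq\mathrm{Bel}(\Psi\div\beta)$; (C8) if $\neg\alpha\models\beta$ then $\mathrm{Bel}(\Psi\div\alpha\div\beta) =_\alpha \mathrm{Bel}(\Psi\div\beta)$; (C9) if $\alpha\models\beta$ then $\mathrm{Bel}(\Psi\div\alpha\div\beta) =_{\neg\beta} \mathrm{Bel}(\Psi\div\beta)$. A belief change operator satisfying (C1)–(C7) is called an AGM contraction operator for epistemic states. For a total preorder $\le$ on $\Omega$ and $\Omega'\subseteq\Omega$, $\min(\Omega',\le)=\{\omega\in\Omega'\mid \omega\le\omega' \text{ for all }\omega'\in\Omega'\}$; $<$ is the strict part and $\simeq$ the induced equivalence. A faithful assignment maps each $\Psi$ to a total preorder $\le_\Psi$ on $\Omega$ with (FA1) $\omega_1,\omega_2\in[\![\Psi]\!]\Rightarrow\omega_1\simeq_\Psi\omega_2$ and (FA2) $\omega_1\in[\![\Psi]\!],\omega_2\notin[\![\Psi]\!]\Rightarrow\omega_1<_\Psi\omega_2$. Known fact: $\div$ satisfies (C1)–(C7) iff there is a faithful assignment with $[\![\Psi\div\alpha]\!]=[\![\Psi]\!]\cup\min([\![\neg\alpha]\!],\le_\Psi)$ for all $\Psi,\alpha$. $\alpha$-equivalence: for $\Omega_1,\Omega_2\subseteq\Omega$, $\Omega_1=_\alpha\Omega_2$ iff $\Omega_1\cap[\![\alpha]\!]=\Omega_2\cap[\![\alpha]\!]$; for sets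 of formulas $X=_\alpha Y$ iff $[\![X]\!]=_\alpha[\![Y]\!]$. *)

theory Defs
  imports Main
begin

text \<open>The signature Sigma is the (finite, automatically nonempty) type 'v.
  Worlds are interpretations 'v => bool.\<close>

datatype 'v fm =
    Atom 'v
  | Top
  | Bot
  | Neg "'v fm"
  | Conj "'v fm" "'v fm"
  | Disj "'v fm" "'v fm"
  | Imp "'v fm" "'v fm"

type_synonym 'v world = "'v \<Rightarrow> bool"

fun sat :: "'v world \<Rightarrow> 'v fm \<Rightarrow> bool" where
  "sat w (Atom p) = w p"
| "sat w Top = True"
| "sat w Bot = False"
| "sat w (Neg a) = (\<not> sat w a)"
| "sat w (Conj a b) = (sat w a \<and> sat w b)"
| "sat w (Disj a b) = (sat w a \<or> sat w b)"
| "sat w (Imp a b) = (sat w a \<longrightarrow> sat w b)"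

definition models :: "'v fm \<Rightarrow> 'v world set" where
  "models a = {w. sat w a}"

definition modelsS :: "'v fm set \<Rightarrow> 'v world set" where
  "modelsS X = {w. \<forall>a\<in>X. sat w a}"

definition entails :: "'v fm set \<Rightarrow> 'v fm \<Rightarrow> bool" where
  "entails X b \<longleftrightarrow> modelsS X \<subseteq> models b"

definition Cn :: "'v fm set \<Rightarrow> 'v fm set" where
  "Cn X = {b. entails X b}"

definition fentails :: "'v fm \<Rightarrow> 'v fm \<Rightarrow> bool" where
  "fentails a b \<longleftrightarrow> models a \<subseteq> models b"

definition fequiv :: "'v fm \<Rightarrow> 'v fm \<Rightarrow> bool" where
  "fequiv a b \<longleftrightarrow> models a = models b"

definition aeq :: "'v fm \<Rightarrow> 'v fm set \<Rightarrow> 'v fm set \<Rightarrow> bool" where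
  "aeq a X Y \<longleftrightarrow> modelsS X \<inter> models a = modelsS Y \<inter> models a"

text \<open>Epistemic states form the type 'e; Bel gives the belief set.
  [[Psi]] = modelsS (Bel Psi).  A belief change operator is contr :: 'e => 'v fm => 'e.\<close>

definition deductively_closed_bel :: "('e \<Rightarrow> 'v fm set) \<Rightarrow> bool" where
  "deductively_closed_bel Bel \<longleftrightarrow> (\<forall>\<Psi>. Cn (Bel \<Psi>) = Bel \<Psi>)"

definition C1 :: "('e \<Rightarrow> 'v fm set) \<Rightarrow> ('e \<Rightarrow> 'v fm \<Rightarrow> 'e) \<Rightarrow> bool" where
  "C1 Bel c \<longleftrightarrow> (\<forall>\<Psi> a. Bel (c \<Psi> a) \<subseteq> Bel \<Psi>)"

definition C2 :: "('e \<Rightarrow> 'v fm set) \<Rightarrow> ('e \<Rightarrow> 'v fm \<Rightarrow> 'e) \<Rightarrow> bool" where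
  "C2 Bel c \<longleftrightarrow> (\<forall>\<Psi> a. a \<notin> Bel \<Psi> \<longrightarrow> Bel \<Psi> \<subseteq> Bel (c \<Psi> a))"

definition C3 :: "('e \<Rightarrow> 'v fm set) \<Rightarrow> ('e \<Rightarrow> 'v fm \<Rightarrow> 'e) \<Rightarrow> bool" where
  "C3 Bel c \<longleftrightarrow> (\<forall>\<Psi> a. \<not> fequiv a Top \<longrightarrow> a \<notin> Bel (c \<Psi> a))"

definition C4 :: "('e \<Rightarrow> 'v fm set) \<Rightarrow> ('e \<Rightarrow> 'v fm \<Rightarrow> 'e) \<Rightarrow> bool" where
  "C4 Bel c \<longleftrightarrow> (\<forall>\<Psi> a. Bel \<Psi> \<subseteq> Cn (Bel (c \<Psi> a) \<union> {a}))"

definition C5 :: "('e \<Rightarrow> 'v fm set) \<Rightarrow> ('e \<Rightarrow> 'v fm \<Rightarrow> 'e) \<Rightarrow> bool" where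
  "C5 Bel c \<longleftrightarrow> (\<forall>\<Psi> a b. fequiv a b \<longrightarrow> Bel (c \<Psi> a) = Bel (c \<Psi> b))"

definition C6 :: "('e \<Rightarrow> 'v fm set) \<Rightarrow> ('e \<Rightarrow> 'v fm \<Rightarrow> 'e) \<Rightarrow> bool" where
  "C6 Bel c \<longleftrightarrow> (\<forall>\<Psi> a b. Bel (c \<Psi> a) \<inter> Bel (c \<Psi> b) \<subseteq> Bel (c \<Psi> (Conj a b)))"

definition C7 :: "('e \<Rightarrow> 'v fm set) \<Rightarrow> ('e \<Rightarrow> 'v fm \<Rightarrow> 'e) \<Rightarrow> bool" where
  "C7 Bel c \<longleftrightarrow> (\<forall>\<Psi> a b. b \<notin> Bel (c \<Psi> (Conj a b)) \<longrightarrow> Bel (c \<Psi> (Conj a b)) \<subseteq> Bel (c \<Psi> b))"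

definition C8 :: "('e \<Rightarrow> 'v fm set) \<Rightarrow> ('e \<Rightarrow> 'v fm \<Rightarrow> 'e) \<Rightarrow> bool" where
  "C8 Bel c \<longleftrightarrow> (\<forall>\<Psi> a b. fentails (Neg a) b \<longrightarrow> aeq a (Bel (c (c \<Psi> a) b)) (Bel (c \<Psi> b)))"

definition C9 :: "('e \<Rightarrow> 'v fm set) \<Rightarrow> ('e \<Rightarrow> 'v fm \<Rightarrow> 'e) \<Rightarrow> bool" where
  "C9 Bel c \<longleftrightarrow> (\<forall>\<Psi> a b. fentails a b \<longrightarrow> aeq (Neg b) (Bel (c (c \<Psi> a) b)) (Bel (c \<Psi> b)))"

definition C10 :: "('e \<Rightarrow> 'v fm set) \<Rightarrow> ('e \<Rightarrow> 'v fm \<Rightarrow> 'e) \<Rightarrow> bool" where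
  "C10 Bel c \<longleftrightarrow> (\<forall>\<Psi> a b g. fentails (Neg a) g \<longrightarrow> g \<in> Bel (c \<Psi> b) \<longrightarrow> g \<in> Bel (c (c \<Psi> a) b))"

definition C11 :: "('e \<Rightarrow> 'v fm set) \<Rightarrow> ('e \<Rightarrow> 'v fm \<Rightarrow> 'e) \<Rightarrow> bool" where
  "C11 Bel c \<longleftrightarrow> (\<forall>\<Psi> a b g. fentails a g \<longrightarrow> g \<in> Bel (c (c \<Psi> a) b) \<longrightarrow> g \<in> Bel (c \<Psi> b))"

definition total_preorder :: "('w \<Rightarrow> 'w \<Rightarrow> bool) \<Rightarrow> bool" where
  "total_preorder le \<longleftrightarrow> (\<forall>x y z. le x y \<longrightarrow> le y z \<longrightarrow> le x z) \<and> (\<forall>x y. le x y \<or> le y x)"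

definition minset :: "'w set \<Rightarrow> ('w \<Rightarrow> 'w \<Rightarrow> bool) \<Rightarrow> 'w set" where
  "minset S le = {w\<in>S. \<forall>w'\<in>S. le w w'}"

definition strict :: "('w \<Rightarrow> 'w \<Rightarrow> bool) \<Rightarrow> 'w \<Rightarrow> 'w \<Rightarrow> bool" where
  "strict le x y \<longleftrightarrow> le x y \<and> \<not> le y x"

definition faithful_assignment ::
  "('e \<Rightarrow> 'v fm set) \<Rightarrow> ('e \<Rightarrow> 'v world \<Rightarrow> 'v world \<Rightarrow> bool) \<Rightarrow> bool" where
  "faithful_assignment Bel le \<longleftrightarrow>
     (\<forall>\<Psi>. total_preorder (le \<Psi>)) \<and>
     (\<forall>\<Psi> w1 w2. w1 \<in> modelsS (Bel \<Psi>) \<longrightarrow> w2 \<in> modelsS (Bel \<Psi>) \<longrightarrow> le \<Psi> w1 w2 \<and> le \<Psi> w2 w1) \<and>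
     (\<forall>\<Psi> w1 w2. w1 \<in> modelsS (Bel \<Psi>) \<longrightarrow> w2 \<notin> modelsS (Bel \<Psi>) \<longrightarrow> strict (le \<Psi>) w1 w2)"

definition CR10 :: "('e \<Rightarrow> 'v fm \<Rightarrow> 'e) \<Rightarrow> ('e \<Rightarrow> 'v world \<Rightarrow> 'v world \<Rightarrow> bool) \<Rightarrow> bool" where
  "CR10 c le \<longleftrightarrow> (\<forall>\<Psi> a w1 w2. w1 \<in> models (Neg a) \<longrightarrow> w2 \<in> models a \<longrightarrow>
      strict (le \<Psi>) w1 w2 \<longrightarrow> strict (le (c \<Psi> a)) w1 w2)"

definition CR11 :: "('e \<Rightarrow> 'v fm \<Rightarrow> 'e) \<Rightarrow> ('e \<Rightarrow> 'v world \<Rightarrow> 'v world \<Rightarrow> bool) \<Rightarrow> bool" where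
  "CR11 c le \<longleftrightarrow> (\<forall>\<Psi> a w1 w2. w1 \<in> models (Neg a) \<longrightarrow> w2 \<in> models a \<longrightarrow>
      le \<Psi> w1 w2 \<longrightarrow> le (c \<Psi> a) w1 w2)"

end

theory Submission
  imports Defs
begin

text \<open>Over a finite signature every set of worlds is definable, so a contraction is determined by
  what it does to the sets of countermodels of formulas. Say w1 \<le> w2 for \<Psi> when w1 survives the
  contraction of \<Psi> by the formula false exactly at w1 and w2; (C1)--(C7) make this a faithful total
  preorder whose minima describe every contraction. Conversely, in any such representation the order
  is read off these pair contractions, and (C8) and (C9) say that contracting by \<alpha> leaves it
  unchanged within [\<alpha>] and within [\<not>\<alpha>]. Hence (C10) and (C11), which compare the minima of [\<not>\<beta>]
  before and after contracting by \<alpha>, amount exactly to (CR10) and (CR11) on pairs of worlds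
  separated by \<alpha>.\<close>

lemma models_simps [simp]:
  "models (Neg a) = - models a" "models (Conj a b) = models a \<inter> models b"
  "models (Disj a b) = models a \<union> models b"
  "models Top = UNIV" "models Bot = {}" "models (Atom v) = {w. w v}"
  by (auto simp: models_def)

lemma modelsS_insert: "modelsS (insert a X) = modelsS X \<inter> models a"
  by (auto simp: modelsS_def models_def)

lemma ex_models_agree_on:
  assumes "finite V"
  shows "\<exists>f. models f = {w'::'v world. \<forall>v\<in>V. w' v = w v}"
  using assms
proof (induction V rule: finite_induct)
  case empty
  show ?case by (rule exI[of _ Top]) simp
next
  case (insert v V)
  then obtain f where f: "models f = {w'::'v world. \<forall>v\<in>V. w' v = w v}" by blast
  show ?case
    by (rule exI[of _ "Conj f (if w v then Atom v else Neg (Atom v))"]) (auto simp: f)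
qed

lemma ex_models_eq: "\<exists>f. models f = (S :: ('v::finite) world set)"
proof -
  have "finite S" by simp
  then show ?thesis
  proof (induction S rule: finite_induct)
    case empty
    show ?case by (rule exI[of _ Bot]) simp
  next
    case (insert w S)
    then obtain f where f: "models f = S" by blast
    obtain h :: "'v fm" where "models h = {w'. \<forall>v\<in>UNIV. w' v = w v}"
      using ex_models_agree_on[of UNIV w] by auto
    then have "models h = {w}" by auto
    then show ?case by (intro exI[of _ "Disj f h"]) (auto simp: f)
  qed
qed

definition form :: "('v::finite) world set \<Rightarrow> 'v fm" where
  "form S = (SOME f. models f = S)"

lemma models_form [simp]: "models (form S) = S"
  unfolding form_def by (rule someI_ex[OF ex_models_eq])

definition pair_fm :: "('v::finite) world \<Rightarrow> 'v world \<Rightarrow> 'v fm" where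
  "pair_fm w1 w2 = form (- {w1, w2})"

lemma models_pair_fm [simp]:
  "models (pair_fm w1 w2) = - {w1, w2}" "models (Neg (pair_fm w1 w2)) = {w1, w2}"
  by (simp_all add: pair_fm_def)

locale closed_beliefs =
  fixes Bel :: "'e \<Rightarrow> ('v::finite) fm set"
  assumes closed: "deductively_closed_bel Bel"
begin

abbreviation mods :: "'e \<Rightarrow> 'v world set" where
  "mods \<Psi> \<equiv> modelsS (Bel \<Psi>)"

lemma Bel_iff: "g \<in> Bel \<Psi> \<longleftrightarrow> mods \<Psi> \<subseteq> models g"
proof -
  have "Cn (Bel \<Psi>) = Bel \<Psi>" using closed by (simp add: deductively_closed_bel_def)
  then show ?thesis unfolding Cn_def entails_def by blast
qed

lemma Bel_subset_iff: "Bel \<Psi> \<subseteq> Bel \<Phi> \<longleftrightarrow> mods \<Phi> \<subseteq> mods \<Psi>"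
proof
  assume "Bel \<Psi> \<subseteq> Bel \<Phi>"
  moreover have "form (mods \<Psi>) \<in> Bel \<Psi>" by (simp add: Bel_iff)
  ultimately have "form (mods \<Psi>) \<in> Bel \<Phi>" by blast
  then show "mods \<Phi> \<subseteq> mods \<Psi>" by (simp add: Bel_iff)
qed (auto simp: Bel_iff)

end

locale agm_contraction = closed_beliefs Bel for Bel :: "'e \<Rightarrow> ('v::finite) fm set" +
  fixes contr :: "'e \<Rightarrow> 'v fm \<Rightarrow> 'e"
  assumes c1: "C1 Bel contr" and c2: "C2 Bel contr" and c3: "C3 Bel contr"
    and c4: "C4 Bel contr" and c5: "C5 Bel contr" and c6: "C6 Bel contr" and c7: "C7 Bel contr"
begin

definition contr_mods :: "'e \<Rightarrow> 'v world set \<Rightarrow> 'v world set" where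
  "contr_mods \<Psi> S = mods (contr \<Psi> (form (- S)))"

lemma mods_contr_eq: "mods (contr \<Psi> a) = contr_mods \<Psi> (models (Neg a))"
proof -
  have "fequiv a (form (- models (Neg a)))" by (simp add: fequiv_def)
  then show ?thesis using c5 by (simp add: C5_def contr_mods_def)
qed

lemma mods_subset_contr_mods: "mods \<Psi> \<subseteq> contr_mods \<Psi> S"
  using c1 by (simp add: C1_def contr_mods_def Bel_subset_iff)

lemma contr_mods_diff_subset: "contr_mods \<Psi> S - S \<subseteq> mods \<Psi>"
proof -
  have "form (mods \<Psi>) \<in> Bel \<Psi>" by (simp add: Bel_iff)
  then have "form (mods \<Psi>) \<in> Cn (Bel (contr \<Psi> (form (- S))) \<union> {form (- S)})"
    using c4 by (auto simp: C4_def)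
  then show ?thesis by (auto simp: Cn_def entails_def modelsS_insert contr_mods_def)
qed

lemma contr_mods_meets: "S \<noteq> {} \<Longrightarrow> contr_mods \<Psi> S \<inter> S \<noteq> {}"
proof -
  assume "S \<noteq> {}"
  then have "\<not> fequiv (form (- S)) Top" by (auto simp: fequiv_def)
  then have "form (- S) \<notin> Bel (contr \<Psi> (form (- S)))" using c3 by (auto simp: C3_def)
  then show ?thesis by (auto simp: Bel_iff contr_mods_def)
qed

lemma contr_mods_vacuous: "S \<inter> mods \<Psi> \<noteq> {} \<Longrightarrow> contr_mods \<Psi> S = mods \<Psi>"
proof -
  assume "S \<inter> mods \<Psi> \<noteq> {}"
  then have "form (- S) \<notin> Bel \<Psi>" by (auto simp: Bel_iff)
  then have "Bel \<Psi> \<subseteq> Bel (contr \<Psi> (form (- S)))" using c2 by (auto simp: C2_def)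
  then show ?thesis using mods_subset_contr_mods[of \<Psi> S] by (auto simp: Bel_subset_iff contr_mods_def)
qed

text \<open>(C6) applied to the formulas with countermodels S and T - S.\<close>

lemma contr_mods_inter_subset:
  assumes "S \<subseteq> T"
  shows "contr_mods \<Psi> T \<inter> S \<subseteq> contr_mods \<Psi> S"
proof -
  let ?a = "form (- S)" and ?c = "form (- (T - S))"
  let ?g = "form (contr_mods \<Psi> S \<union> contr_mods \<Psi> (T - S))"
  have "?g \<in> Bel (contr \<Psi> ?a)" "?g \<in> Bel (contr \<Psi> ?c)" by (auto simp: Bel_iff contr_mods_def)
  then have "?g \<in> Bel (contr \<Psi> (Conj ?a ?c))" using c6 by (auto simp: C6_def)
  moreover have "models (Neg (Conj ?a ?c)) = T" using assms by auto
  ultimately have "contr_mods \<Psi> T \<subseteq> contr_mods \<Psi> S \<union> contr_mods \<Psi> (T - S)"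
    by (metis Bel_iff models_form mods_contr_eq)
  moreover have "contr_mods \<Psi> (T - S) \<inter> S \<subseteq> contr_mods \<Psi> S"
    using contr_mods_diff_subset[of \<Psi> "T - S"] mods_subset_contr_mods[of \<Psi> S] by blast
  ultimately show ?thesis by blast
qed

lemma contr_mods_mono:
  assumes "S \<subseteq> T" and "contr_mods \<Psi> T \<inter> S \<noteq> {}"
  shows "contr_mods \<Psi> S \<subseteq> contr_mods \<Psi> T"
proof -
  let ?a = "form (- T)" and ?b = "form (- S)"
  have T: "models (Neg (Conj ?a ?b)) = T" using assms(1) by auto
  have "?b \<notin> Bel (contr \<Psi> (Conj ?a ?b))"
    unfolding Bel_iff mods_contr_eq T using assms(2) by auto
  then have "Bel (contr \<Psi> (Conj ?a ?b)) \<subseteq> Bel (contr \<Psi> ?b)" using c7 by (auto simp: C7_def)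
  then show ?thesis unfolding Bel_subset_iff mods_contr_eq T by (simp add: contr_mods_def)
qed

definition induced_le :: "'e \<Rightarrow> 'v world \<Rightarrow> 'v world \<Rightarrow> bool" where
  "induced_le \<Psi> w1 w2 \<longleftrightarrow> w1 \<in> contr_mods \<Psi> {w1, w2}"

lemma contr_mods_eq_minset: "contr_mods \<Psi> S = mods \<Psi> \<union> minset S (induced_le \<Psi>)"
proof (intro equalityI subsetI)
  fix w assume w: "w \<in> contr_mods \<Psi> S"
  have "induced_le \<Psi> w w'" if "w \<in> S" "w' \<in> S" for w'
    using contr_mods_inter_subset[of "{w, w'}" S \<Psi>] that w by (auto simp: induced_le_def)
  then show "w \<in> mods \<Psi> \<union> minset S (induced_le \<Psi>)"
    using w contr_mods_diff_subset[of \<Psi> S] by (auto simp: minset_def)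
next
  fix w assume "w \<in> mods \<Psi> \<union> minset S (induced_le \<Psi>)"
  then consider "w \<in> mods \<Psi>" | "w \<in> minset S (induced_le \<Psi>)" by blast
  then show "w \<in> contr_mods \<Psi> S"
  proof cases
    case 1
    then show ?thesis using mods_subset_contr_mods by blast
  next
    case 2
    then have "S \<noteq> {}" by (auto simp: minset_def)
    then obtain w0 where w0: "w0 \<in> contr_mods \<Psi> S" "w0 \<in> S" using contr_mods_meets by blast
    then have "contr_mods \<Psi> {w, w0} \<subseteq> contr_mods \<Psi> S"
      using 2 by (intro contr_mods_mono) (auto simp: minset_def)
    moreover have "w \<in> contr_mods \<Psi> {w, w0}" using 2 w0 by (auto simp: minset_def induced_le_def)
    ultimately show ?thesis by blast
  qed
qed

lemma induced_le_total: "induced_le \<Psi> x y \<or> induced_le \<Psi> y x"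
  using contr_mods_meets[of "{x, y}" \<Psi>] by (auto simp: induced_le_def insert_commute)

lemma induced_le_trans:
  assumes "induced_le \<Psi> x y" and "induced_le \<Psi> y z"
  shows "induced_le \<Psi> x z"
proof -
  let ?S = "{x, y, z}"
  have up: "u \<in> contr_mods \<Psi> ?S" if "v \<in> contr_mods \<Psi> ?S" "u \<in> ?S" "v \<in> ?S" "induced_le \<Psi> u v"
    for u v
    using contr_mods_mono[of "{u, v}" ?S \<Psi>] that by (auto simp: induced_le_def)
  obtain m where "m \<in> contr_mods \<Psi> ?S" "m \<in> ?S" using contr_mods_meets[of ?S \<Psi>] by blast
  then have "x \<in> contr_mods \<Psi> ?S" using up assms by blast
  then show ?thesis using contr_mods_inter_subset[of "{x, z}" ?S \<Psi>] by (auto simp: induced_le_def)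
qed

lemma faithful_induced_le: "faithful_assignment Bel induced_le"
proof -
  have "total_preorder (induced_le \<Psi>)" for \<Psi>
    unfolding total_preorder_def using induced_le_total induced_le_trans by blast
  moreover have "induced_le \<Psi> w1 w2" if "w1 \<in> mods \<Psi>" for \<Psi> w1 w2
    using that mods_subset_contr_mods by (auto simp: induced_le_def)
  moreover have "\<not> induced_le \<Psi> w2 w1" if "w1 \<in> mods \<Psi>" "w2 \<notin> mods \<Psi>" for \<Psi> w1 w2
    using that contr_mods_vacuous[of "{w2, w1}" \<Psi>] by (auto simp: induced_le_def)
  ultimately show ?thesis unfolding faithful_assignment_def strict_def by blast
qed

lemma mods_contr_eq_minset:
  "mods (contr \<Psi> a) = mods \<Psi> \<union> minset (models (Neg a)) (induced_le \<Psi>)"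
  by (simp add: mods_contr_eq contr_mods_eq_minset)

end

locale faithful_contraction = closed_beliefs Bel for Bel :: "'e \<Rightarrow> ('v::finite) fm set" +
  fixes contr :: "'e \<Rightarrow> 'v fm \<Rightarrow> 'e"
    and le :: "'e \<Rightarrow> 'v world \<Rightarrow> 'v world \<Rightarrow> bool"
  assumes faithful: "faithful_assignment Bel le"
    and mods_contr: "\<And>\<Psi> a. mods (contr \<Psi> a) = mods \<Psi> \<union> minset (models (Neg a)) (le \<Psi>)"
begin

lemma le_total: "le \<Psi> x y \<or> le \<Psi> y x"
  using faithful by (simp add: faithful_assignment_def total_preorder_def)

lemma strict_iff_not_le: "strict (le \<Psi>) x y \<longleftrightarrow> \<not> le \<Psi> y x"
  using le_total by (auto simp: strict_def)

lemma le_if_in_mods: "w1 \<in> mods \<Psi> \<Longrightarrow> le \<Psi> w1 w2"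
  using faithful unfolding faithful_assignment_def strict_def by blast

lemma in_mods_contr_pair_iff: "w1 \<in> mods (contr \<Psi> (pair_fm w1 w2)) \<longleftrightarrow> le \<Psi> w1 w2"
  using le_if_in_mods[of w1 \<Psi>] le_total[of \<Psi> w1 w1] by (auto simp: mods_contr minset_def)

text \<open>(C8) and (C9) applied to the pair formula of w1 and w2.\<close>

lemma le_contr_inside_iff:
  assumes "C8 Bel contr" and "w1 \<in> models a" and "w2 \<in> models a"
  shows "le (contr \<Psi> a) w1 w2 \<longleftrightarrow> le \<Psi> w1 w2"
proof -
  have "fentails (Neg a) (pair_fm w1 w2)" using assms(2,3) by (auto simp: fentails_def)
  then have "aeq a (Bel (contr (contr \<Psi> a) (pair_fm w1 w2))) (Bel (contr \<Psi> (pair_fm w1 w2)))"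
    using assms(1) by (simp add: C8_def)
  then show ?thesis using assms(2) unfolding aeq_def in_mods_contr_pair_iff[symmetric] by blast
qed

lemma le_contr_outside_iff:
  assumes "C9 Bel contr" and "w1 \<notin> models a" and "w2 \<notin> models a"
  shows "le (contr \<Psi> a) w1 w2 \<longleftrightarrow> le \<Psi> w1 w2"
proof -
  have "fentails a (pair_fm w1 w2)" using assms(2,3) by (auto simp: fentails_def)
  then have "aeq (Neg (pair_fm w1 w2))
      (Bel (contr (contr \<Psi> a) (pair_fm w1 w2))) (Bel (contr \<Psi> (pair_fm w1 w2)))"
    using assms(1) by (simp add: C9_def)
  then show ?thesis unfolding aeq_def in_mods_contr_pair_iff[symmetric] by auto
qed

lemma minset_contr_imp_minset:
  assumes "C8 Bel contr" and "CR10 contr le"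
    and "w \<in> models a" and w: "w \<in> minset S (le (contr \<Psi> a))"
  shows "w \<in> minset S (le \<Psi>)"
proof -
  have "le \<Psi> w w'" if "w' \<in> S" for w'
  proof (cases "w' \<in> models a")
    case True
    then show ?thesis using le_contr_inside_iff[OF assms(1,3) True] w that by (auto simp: minset_def)
  next
    case False
    with assms(2,3) have "strict (le \<Psi>) w' w \<longrightarrow> strict (le (contr \<Psi> a)) w' w"
      unfolding CR10_def by auto
    then show ?thesis using w that by (auto simp: minset_def strict_iff_not_le)
  qed
  then show ?thesis using w by (auto simp: minset_def)
qed

lemma minset_imp_minset_contr:
  assumes "C9 Bel contr" and "CR11 contr le"
    and "w \<notin> models a" and w: "w \<in> minset S (le \<Psi>)"
  shows "w \<in> minset S (le (contr \<Psi> a))"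
proof -
  have "le (contr \<Psi> a) w w'" if "w' \<in> S" for w'
  proof (cases "w' \<in> models a")
    case True
    then show ?thesis using assms(2,3) w that unfolding CR11_def minset_def by auto
  next
    case False
    then show ?thesis using le_contr_outside_iff[OF assms(1,3) False] w that by (auto simp: minset_def)
  qed
  then show ?thesis using w by (auto simp: minset_def)
qed

lemma C10_if_CR10:
  assumes "C8 Bel contr" and "CR10 contr le"
  shows "C10 Bel contr"
  unfolding C10_def
proof (intro allI impI)
  fix \<Psi> a b g
  assume "fentails (Neg a) g" and "g \<in> Bel (contr \<Psi> b)"
  then have na: "- models a \<subseteq> models g"
    and b: "mods \<Psi> \<union> minset (- models b) (le \<Psi>) \<subseteq> models g"
    by (simp_all add: fentails_def Bel_iff mods_contr)
  have "mods (contr \<Psi> a) \<subseteq> models g" using na b by (auto simp: mods_contr minset_def)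
  moreover have "minset (- models b) (le (contr \<Psi> a)) \<subseteq> models g"
    using minset_contr_imp_minset[OF assms] na b by blast
  ultimately show "g \<in> Bel (contr (contr \<Psi> a) b)" by (simp add: Bel_iff mods_contr[of "contr \<Psi> a"])
qed

lemma C11_if_CR11:
  assumes "C9 Bel contr" and "CR11 contr le"
  shows "C11 Bel contr"
  unfolding C11_def
proof (intro allI impI)
  fix \<Psi> a b g
  assume "fentails a g" and "g \<in> Bel (contr (contr \<Psi> a) b)"
  then have a: "models a \<subseteq> models g"
    and ab: "mods (contr \<Psi> a) \<union> minset (- models b) (le (contr \<Psi> a)) \<subseteq> models g"
    by (simp_all add: fentails_def Bel_iff mods_contr[of "contr \<Psi> a"])
  have "mods \<Psi> \<subseteq> models g" using ab by (auto simp: mods_contr)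
  moreover have "minset (- models b) (le \<Psi>) \<subseteq> models g"
    using minset_imp_minset_contr[OF assms] a ab by blast
  ultimately show "g \<in> Bel (contr \<Psi> b)" by (simp add: Bel_iff mods_contr)
qed

text \<open>For the converses, contract by the pair formula and test the belief that excludes one world.\<close>

lemma CR10_if_C10:
  assumes "C10 Bel contr"
  shows "CR10 contr le"
  unfolding CR10_def
proof (intro allI impI)
  fix \<Psi> a w1 w2
  assume "w1 \<in> models (Neg a)" and w2: "w2 \<in> models a" and "strict (le \<Psi>) w1 w2"
  then have "form (- {w2}) \<in> Bel (contr \<Psi> (pair_fm w2 w1))"
    using in_mods_contr_pair_iff[of w2 \<Psi> w1] by (auto simp: Bel_iff strict_iff_not_le)
  moreover have "fentails (Neg a) (form (- {w2}))" using w2 by (auto simp: fentails_def)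
  ultimately have "form (- {w2}) \<in> Bel (contr (contr \<Psi> a) (pair_fm w2 w1))"
    using assms by (auto simp: C10_def)
  then show "strict (le (contr \<Psi> a)) w1 w2"
    using in_mods_contr_pair_iff[of w2 "contr \<Psi> a" w1] by (auto simp: Bel_iff strict_iff_not_le)
qed

lemma CR11_if_C11:
  assumes "C11 Bel contr"
  shows "CR11 contr le"
  unfolding CR11_def
proof (intro allI impI)
  fix \<Psi> a w1 w2
  assume w1: "w1 \<in> models (Neg a)" and "w2 \<in> models a" and le: "le \<Psi> w1 w2"
  show "le (contr \<Psi> a) w1 w2"
  proof (rule ccontr)
    assume "\<not> le (contr \<Psi> a) w1 w2"
    then have "form (- {w1}) \<in> Bel (contr (contr \<Psi> a) (pair_fm w1 w2))"
      using in_mods_contr_pair_iff[of w1 "contr \<Psi> a" w2] by (auto simp: Bel_iff)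
    moreover have "fentails a (form (- {w1}))" using w1 by (auto simp: fentails_def)
    ultimately have "form (- {w1}) \<in> Bel (contr \<Psi> (pair_fm w1 w2))"
      using assms by (auto simp: C11_def)
    then show False using in_mods_contr_pair_iff[of w1 \<Psi> w2] le by (auto simp: Bel_iff)
  qed
qed

lemma C10_C11_iff_CR10_CR11:
  assumes "C8 Bel contr" and "C9 Bel contr"
  shows "C10 Bel contr \<and> C11 Bel contr \<longleftrightarrow> CR10 contr le \<and> CR11 contr le"
  using assms C10_if_CR10 C11_if_CR11 CR10_if_C10 CR11_if_C11 by blast

end

theorem mainTheorem8:
  fixes Bel :: "'e \<Rightarrow> ('v::finite) fm set"
    and contr :: "'e \<Rightarrow> 'v fm \<Rightarrow> 'e"
  assumes "deductively_closed_bel Bel"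
    and "C1 Bel contr" and "C2 Bel contr" and "C3 Bel contr" and "C4 Bel contr"
    and "C5 Bel contr" and "C6 Bel contr" and "C7 Bel contr"
    and "C8 Bel contr" and "C9 Bel contr"
  shows "(C10 Bel contr \<and> C11 Bel contr) \<longleftrightarrow>
         (\<exists>le. faithful_assignment Bel le \<and>
               (\<forall>\<Psi> a. modelsS (Bel (contr \<Psi> a)) =
                        modelsS (Bel \<Psi>) \<union> minset (models (Neg a)) (le \<Psi>)) \<and>
               CR10 contr le \<and> CR11 contr le)"
proof -
  interpret agm_contraction Bel contr using assms by unfold_locales
  have iff: "C10 Bel contr \<and> C11 Bel contr \<longleftrightarrow> CR10 contr le \<and> CR11 contr le"
    if "faithful_assignment Bel le"
      and "\<forall>\<Psi> a. mods (contr \<Psi> a) = mods \<Psi> \<union> minset (models (Neg a)) (le \<Psi>)" for le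
  proof -
    interpret faithful_contraction Bel contr le using assms(1) that by unfold_locales auto
    show ?thesis using assms(9,10) by (rule C10_C11_iff_CR10_CR11)
  qed
  show ?thesis
    using iff faithful_induced_le mods_contr_eq_minset by blast
qed

end
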